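(* Consider a qubit chain with sites indexed by $\mathbb{Z}$ and the Floquet unitary $U=\prod_{i\ \mathrm{odd}}C_{i,i+1}\prod_{i\ \mathrm{even}}C_{i,i+1}$, where each $C_{i,i+1}$ is a two-qubit Clifford gate on sites $(i,i+1)$ that is not in the product class. Let $k\ge1$, $a\in\mathbb{Z}$, and suppose $U$ has an irreducible left $k$-wall around $C=\{a+1,\dots,a+k\}$. Then the first gate $C_{a,a+1}$ and the last gate $C_{a+k,a+k+1}$ of the wall both belong to the $\mathrm{CZ}$-class.
   Context: Two-qubit Clifford gates fall into four classes under $C\mapsto(a_1\otimes a_2)C(a_3\otimes a_4)$ with $a_i$ single-qubit Cliffords (up to global phase): the product class (gates of the form $a\otimes b$), the $\mathrm{CZ}$-class $\{(a_1\otimes a_2)\,\mathrm{CZ}\,(a_3\otimes a_4)\}$ with $\mathrm{CZ}=\mathrm{diag}(1,1,1,-1)$, the $\mathrm{SWAP}$-class $\{(a_1\otimes a_2)\,\mathrm{SWAP}\,(a_3\otimes a_4)\}$, and the $\mathrm{FSWAP}$-class $\{(a_1\otimes a_2)\,\mathrm{CZ}\cdot\mathrm{SWAP}\,(a_3\otimes a_4)\}$. For integers $b\le c$, set $L_b=\{i\le b\}$, $C_{b,c}=\{b+1,\dots,c\}$ (empty if $b=c$), $R_c=\{i>c\}$. $U$ satisfies the left wall condition for $(b,c)$ if for every finitely supported Pauli string $P$ supported in $L_b$ and every integer $t\ge1$, $U^tPU^{-t}$ acts as the identity on every site of $R_c$. $U$ has an irreducible left $k$-wall around $\{a+1,\dots,a+k\}$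 if it satisfies the left wall condition for $(a,a+k)$ but not for any $(b,c)$ with $a\le b\le c\le a+k$ and $(b,c)\ne(a,a+k)$. *)

theory Defs
  imports Complex_Main
begin

text \<open>Basis state False = |0>, True = |1>. A two-qubit index (x,y) means |x>|y>,
  first component = left site.\<close>

type_synonym mat1 = "bool \<Rightarrow> bool \<Rightarrow> complex"
type_synonym mat2 = "bool \<times> bool \<Rightarrow> bool \<times> bool \<Rightarrow> complex"

definition mul1 :: "mat1 \<Rightarrow> mat1 \<Rightarrow> mat1" where
  "mul1 A B = (\<lambda>i k. \<Sum>j\<in>UNIV. A i j * B j k)"
definition mul2 :: "mat2 \<Rightarrow> mat2 \<Rightarrow> mat2" where
  "mul2 A B = (\<lambda>i k. \<Sum>j\<in>UNIV. A i j * B j k)"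
definition adj1 :: "mat1 \<Rightarrow> mat1" where
  "adj1 A = (\<lambda>i j. cnj (A j i))"
definition adj2 :: "mat2 \<Rightarrow> mat2" where
  "adj2 A = (\<lambda>i j. cnj (A j i))"
definition id1 :: mat1 where
  "id1 = (\<lambda>i j. if i = j then 1 else 0)"
definition id2 :: mat2 where
  "id2 = (\<lambda>i j. if i = j then 1 else 0)"
definition smult1 :: "complex \<Rightarrow> mat1 \<Rightarrow> mat1" where
  "smult1 c A = (\<lambda>i j. c * A i j)"
definition smult2 :: "complex \<Rightarrow> mat2 \<Rightarrow> mat2" where
  "smult2 c A = (\<lambda>i j. c * A i j)"

definition tensor :: "mat1 \<Rightarrow> mat1 \<Rightarrow> mat2" where
  "tensor A B = (\<lambda>(i,j) (k,l). A i k * B j l)"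

definition unitary1 :: "mat1 \<Rightarrow> bool" where
  "unitary1 A \<longleftrightarrow> mul1 A (adj1 A) = id1 \<and> mul1 (adj1 A) A = id1"
definition unitary2 :: "mat2 \<Rightarrow> bool" where
  "unitary2 A \<longleftrightarrow> mul2 A (adj2 A) = id2 \<and> mul2 (adj2 A) A = id2"

datatype pauli = PI | PX | PY | PZ

definition pmat :: "pauli \<Rightarrow> mat1" where
  "pmat p = (case p of
      PI \<Rightarrow> id1
    | PX \<Rightarrow> (\<lambda>i j. if i \<noteq> j then 1 else 0)
    | PY \<Rightarrow> (\<lambda>i j. if i = j then 0 else if j then - \<i> else \<i>)
    | PZ \<Rightarrow> (\<lambda>i j. if i \<noteq> j then 0 else if i then -1 else 1))"

definition clifford1 :: "mat1 \<Rightarrow> bool" where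
  "clifford1 A \<longleftrightarrow> unitary1 A \<and>
     (\<forall>p. \<exists>c q. mul1 (mul1 A (pmat p)) (adj1 A) = smult1 c (pmat q))"

definition clifford2 :: "mat2 \<Rightarrow> bool" where
  "clifford2 C \<longleftrightarrow> unitary2 C \<and>
     (\<forall>p q. \<exists>c p' q'. mul2 (mul2 C (tensor (pmat p) (pmat q))) (adj2 C)
                      = smult2 c (tensor (pmat p') (pmat q')))"

definition CZ :: mat2 where
  "CZ = (\<lambda>i j. if i = j then (if fst i \<and> snd i then -1 else 1) else 0)"

definition SWAP :: mat2 where
  "SWAP = (\<lambda>(x,y) j. if j = (y,x) then 1 else 0)"

text \<open>Classes are taken up to global phase.\<close>
definition product_class :: "mat2 \<Rightarrow> bool" where
  "product_class C \<longleftrightarrow> (\<exists>a b c. clifford1 a \<and> clifford1 b \<and> C = smult2 c (tensor a b))"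

definition gate_class :: "mat2 \<Rightarrow> mat2 \<Rightarrow> bool" where
  "gate_class G C \<longleftrightarrow> (\<exists>a1 a2 a3 a4 c. clifford1 a1 \<and> clifford1 a2 \<and> clifford1 a3 \<and> clifford1 a4
      \<and> C = smult2 c (mul2 (mul2 (tensor a1 a2) G) (tensor a3 a4)))"

definition CZ_class :: "mat2 \<Rightarrow> bool" where
  "CZ_class C \<longleftrightarrow> gate_class CZ C"

definition gate_act :: "mat2 \<Rightarrow> pauli \<times> pauli \<Rightarrow> pauli \<times> pauli" where
  "gate_act C pq = (THE r. \<exists>c.
      mul2 (mul2 C (tensor (pmat (fst pq)) (pmat (snd pq)))) (adj2 C)
        = smult2 c (tensor (pmat (fst r)) (pmat (snd r))))"

text \<open>A Pauli string (modulo phase) on the chain indexed by int; \<open>G i\<close> is the gate on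
  sites (i, i+1).\<close>
definition layer :: "int \<Rightarrow> (int \<Rightarrow> mat2) \<Rightarrow> (int \<Rightarrow> pauli) \<Rightarrow> (int \<Rightarrow> pauli)" where
  "layer par G P = (\<lambda>j. let i = (if even (j - par) then j else j - 1);
                          r = gate_act (G i) (P i, P (i + 1))
                      in if j = i then fst r else snd r)"

text \<open>\<open>U = (\<Prod>odd C) (\<Prod>even C)\<close>; conjugation \<open>U P U\<^sup>-\<^sup>1\<close> applies the even layer first.\<close>
definition Ustep :: "(int \<Rightarrow> mat2) \<Rightarrow> (int \<Rightarrow> pauli) \<Rightarrow> (int \<Rightarrow> pauli)" where
  "Ustep G P = layer 1 G (layer 0 G P)"

definition left_wall :: "(int \<Rightarrow> mat2) \<Rightarrow> int \<Rightarrow> int \<Rightarrow> bool" where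
  "left_wall G b c \<longleftrightarrow>
     (\<forall>P. finite {i. P i \<noteq> PI} \<longrightarrow> (\<forall>i. P i \<noteq> PI \<longrightarrow> i \<le> b) \<longrightarrow>
        (\<forall>t::nat. t \<ge> 1 \<longrightarrow> (\<forall>j. j > c \<longrightarrow> (Ustep G ^^ t) P j = PI)))"

definition irreducible_left_wall :: "(int \<Rightarrow> mat2) \<Rightarrow> int \<Rightarrow> nat \<Rightarrow> bool" where
  "irreducible_left_wall G a k \<longleftrightarrow> left_wall G a (a + int k) \<and>
     (\<forall>b c. a \<le> b \<longrightarrow> b \<le> c \<longrightarrow> c \<le> a + int k \<longrightarrow> (b, c) \<noteq> (a, a + int k) \<longrightarrow>
        \<not> left_wall G b c)"

end

theory Submission
  imports Defs
begin

text \<open>Conjugation by a two-qubit Clifford gate acts on the two-qubit Pauli labels as a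
  symplectic automorphism, and this action determines the gate up to a Pauli factor. An
  analysis of such automorphisms shows that a gate outside the product class that keeps some
  \<open>p \<otimes> I\<close>, \<open>p \<noteq> I\<close>, on its left qubit lies in the \<open>CZ\<close> class. Hence if the first gate \<open>G a\<close>
  is not in the \<open>CZ\<close> class, the right part of its image of \<open>p \<otimes> I\<close> runs through all Paulis
  as \<open>p\<close> does; a string reaching site \<open>a + 1\<close> then evolves as a product of strings supported
  in \<open>L\<^sub>a\<close>, so the wall already holds for \<open>(a + 1, a + k)\<close>. If the last gate \<open>G (a + k)\<close> is
  not in the \<open>CZ\<close> class, it pushes any Pauli at site \<open>a + k\<close> to site \<open>a + k + 1\<close>, so the wall
  holds for \<open>(a, a + k - 1)\<close>. Both contradict irreducibility.\<close>

section \<open>Matrix algebra on one and two qubits\<close>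

lemma UNIV_bool_pair: "(UNIV :: (bool \<times> bool) set) = {(False,False), (False,True), (True,False), (True,True)}"
  by auto

lemma sum_UNIV_bool_pair:
  "(\<Sum>j\<in>UNIV. f j) = f (False,False) + f (False,True) + f (True,False) + f (True,True)"
  for f :: "bool \<times> bool \<Rightarrow> 'a::comm_monoid_add"
  by (simp add: UNIV_bool_pair add.assoc)

lemma sum_UNIV_bool: "(\<Sum>j\<in>UNIV. f j) = f False + f True"
  for f :: "bool \<Rightarrow> 'a::comm_monoid_add"
  by (simp add: UNIV_bool add.commute)

lemma mul1_assoc: "mul1 (mul1 A B) C = mul1 A (mul1 B C)"
  by (simp add: fun_eq_iff mul1_def sum_UNIV_bool algebra_simps)

lemma mul2_assoc: "mul2 (mul2 A B) C = mul2 A (mul2 B C)"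
  by (simp add: fun_eq_iff mul2_def sum_UNIV_bool_pair algebra_simps)

lemma mul1_id1 [simp]: "mul1 id1 A = A" "mul1 A id1 = A"
  by (simp_all add: fun_eq_iff mul1_def sum_UNIV_bool id1_def)

lemma mul2_id2 [simp]: "mul2 id2 A = A" "mul2 A id2 = A"
  by (auto simp add: fun_eq_iff mul2_def sum_UNIV_bool_pair id2_def)

lemma mul1_smult1 [simp]: "mul1 A (smult1 c B) = smult1 c (mul1 A B)" "mul1 (smult1 c B) A = smult1 c (mul1 B A)"
  by (simp_all add: fun_eq_iff mul1_def smult1_def sum_UNIV_bool algebra_simps)

lemma mul2_smult2 [simp]: "mul2 A (smult2 c B) = smult2 c (mul2 A B)" "mul2 (smult2 c B) A = smult2 c (mul2 B A)"
  by (simp_all add: fun_eq_iff mul2_def smult2_def sum_UNIV_bool_pair algebra_simps)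

lemma smult1_smult1 [simp]: "smult1 c (smult1 d A) = smult1 (c * d) A"
  by (simp add: fun_eq_iff smult1_def)

lemma smult2_smult2 [simp]: "smult2 c (smult2 d A) = smult2 (c * d) A"
  by (simp add: fun_eq_iff smult2_def)

lemma smult1_1 [simp]: "smult1 1 A = A"
  by (simp add: fun_eq_iff smult1_def)

lemma smult2_1 [simp]: "smult2 1 A = A"
  by (simp add: fun_eq_iff smult2_def)

lemma adj1_mul1: "adj1 (mul1 A B) = mul1 (adj1 B) (adj1 A)"
  by (simp add: fun_eq_iff mul1_def adj1_def sum_UNIV_bool algebra_simps)

lemma adj2_mul2: "adj2 (mul2 A B) = mul2 (adj2 B) (adj2 A)"
  by (simp add: fun_eq_iff mul2_def adj2_def sum_UNIV_bool_pair algebra_simps)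

lemma adj2_adj2 [simp]: "adj2 (adj2 A) = A"
  by (simp add: fun_eq_iff adj2_def)

lemma tensor_mul1: "mul2 (tensor A B) (tensor C D) = tensor (mul1 A C) (mul1 B D)"
  by (simp add: fun_eq_iff mul2_def tensor_def mul1_def sum_UNIV_bool_pair sum_UNIV_bool
      algebra_simps split: prod.split)

lemma adj2_tensor: "adj2 (tensor A B) = tensor (adj1 A) (adj1 B)"
  by (simp add: fun_eq_iff adj2_def tensor_def adj1_def split: prod.split)

lemma tensor_smult1: "tensor (smult1 c A) (smult1 d B) = smult2 (c * d) (tensor A B)"
  by (simp add: fun_eq_iff smult2_def tensor_def smult1_def split: prod.split)

lemma tensor_id1: "tensor id1 id1 = id2"
  by (auto simp add: fun_eq_iff id2_def tensor_def id1_def split: prod.split)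

lemma unitary1_mul1: "unitary1 A \<Longrightarrow> unitary1 B \<Longrightarrow> unitary1 (mul1 A B)"
  unfolding unitary1_def by (simp add: adj1_mul1 mul1_assoc) (simp add: mul1_assoc[symmetric])

lemma unitary2_mul2: "unitary2 A \<Longrightarrow> unitary2 B \<Longrightarrow> unitary2 (mul2 A B)"
  unfolding unitary2_def by (simp add: adj2_mul2 mul2_assoc) (simp add: mul2_assoc[symmetric])

lemma unitary2_tensor: "unitary1 A \<Longrightarrow> unitary1 B \<Longrightarrow> unitary2 (tensor A B)"
  unfolding unitary1_def unitary2_def by (simp add: adj2_tensor tensor_mul1 tensor_id1)

text \<open>Orthogonality of the Pauli matrices for the Hilbert--Schmidt inner product makes the
  label of a nonzero multiple of a Pauli matrix unique.\<close>

definition hs_inner1 :: "mat1 \<Rightarrow> mat1 \<Rightarrow> complex" where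
  "hs_inner1 A B = (\<Sum>i\<in>UNIV. \<Sum>j\<in>UNIV. cnj (A i j) * B i j)"

definition hs_inner2 :: "mat2 \<Rightarrow> mat2 \<Rightarrow> complex" where
  "hs_inner2 A B = (\<Sum>i\<in>UNIV. \<Sum>j\<in>UNIV. cnj (A i j) * B i j)"

lemma hs_inner1_smult1: "hs_inner1 A (smult1 c B) = c * hs_inner1 A B"
  by (simp add: hs_inner1_def smult1_def sum_UNIV_bool algebra_simps)

lemma hs_inner2_smult2: "hs_inner2 A (smult2 c B) = c * hs_inner2 A B"
  by (simp add: hs_inner2_def smult2_def sum_UNIV_bool_pair algebra_simps)

lemma hs_inner2_tensor: "hs_inner2 (tensor A B) (tensor C D) = hs_inner1 A C * hs_inner1 B D"
  by (simp add: hs_inner2_def hs_inner1_def tensor_def sum_UNIV_bool_pair sum_UNIV_bool algebra_simps)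

fun pauli_mul :: "pauli \<Rightarrow> pauli \<Rightarrow> pauli" where
  "pauli_mul PI q = q"
| "pauli_mul p PI = p"
| "pauli_mul PX PX = PI" | "pauli_mul PY PY = PI" | "pauli_mul PZ PZ = PI"
| "pauli_mul PX PY = PZ" | "pauli_mul PY PX = PZ"
| "pauli_mul PY PZ = PX" | "pauli_mul PZ PY = PX"
| "pauli_mul PZ PX = PY" | "pauli_mul PX PZ = PY"

fun pauli_phase :: "pauli \<Rightarrow> pauli \<Rightarrow> complex" where
  "pauli_phase PX PY = \<i>" | "pauli_phase PY PZ = \<i>" | "pauli_phase PZ PX = \<i>"
| "pauli_phase PY PX = - \<i>" | "pauli_phase PZ PY = - \<i>" | "pauli_phase PX PZ = - \<i>"
| "pauli_phase _ _ = 1"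

definition anticomm :: "pauli \<Rightarrow> pauli \<Rightarrow> bool" where
  "anticomm p q \<longleftrightarrow> p \<noteq> PI \<and> q \<noteq> PI \<and> p \<noteq> q"

lemma pauli_mul_PI_right [simp]: "pauli_mul p PI = p"
  by (cases p) simp_all

lemma pauli_mul_self [simp]: "pauli_mul p p = PI"
  by (cases p) simp_all

lemma pauli_mul_cancel [simp]: "pauli_mul (pauli_mul p q) q = p" "pauli_mul q (pauli_mul q p) = p"
  "pauli_mul q (pauli_mul p q) = p"
  by (cases p; cases q; simp)+

lemma pauli_mul_eq_PI_iff: "pauli_mul p q = PI \<longleftrightarrow> p = q"
  by (cases p; cases q; simp)

lemma pauli_phase_nonzero [simp]: "pauli_phase p q \<noteq> 0"
  by (cases p; cases q; simp)

lemma anticomm_PI [simp]: "\<not> anticomm p PI" "\<not> anticomm PI p"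
  by (simp_all add: anticomm_def)

lemma UNIV_pauli: "(UNIV :: pauli set) = {PI, PX, PY, PZ}"
  by (auto intro: pauli.exhaust)

lemma finite_UNIV_pauli [simp]: "finite (UNIV :: pauli set)"
  by (simp add: UNIV_pauli)

lemma finite_UNIV_pauli_pair [simp]: "finite (UNIV :: (pauli \<times> pauli) set)"
  by (metis finite_UNIV_pauli finite_cartesian_product UNIV_Times_UNIV)

lemma pmat_PI: "pmat PI = id1"
  by (simp add: pmat_def)

lemma pmat_mul: "mul1 (pmat p) (pmat q) = smult1 (pauli_phase p q) (pmat (pauli_mul p q))"
  by (cases p; cases q; simp add: fun_eq_iff mul1_def pmat_def smult1_def sum_UNIV_bool id1_def)

lemma pmat_commute:
  "mul1 (pmat p) (pmat q) = smult1 (if anticomm p q then -1 else 1) (mul1 (pmat q) (pmat p))"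
  by (cases p; cases q; simp add: anticomm_def fun_eq_iff mul1_def pmat_def smult1_def sum_UNIV_bool id1_def)

lemma adj1_pmat [simp]: "adj1 (pmat p) = pmat p"
  by (cases p; simp add: fun_eq_iff adj1_def pmat_def id1_def)

lemma hs_inner1_pmat: "hs_inner1 (pmat p) (pmat q) = (if p = q then 2 else 0)"
  by (cases p; cases q; simp add: hs_inner1_def pmat_def sum_UNIV_bool id1_def)

lemma smult1_pmat_eqD:
  assumes "smult1 c (pmat p) = smult1 d (pmat q)" "c \<noteq> 0"
  shows "p = q \<and> c = d"
proof -
  have "hs_inner1 (pmat p) (smult1 c (pmat p)) = hs_inner1 (pmat p) (smult1 d (pmat q))"
    using assms by simp
  hence "c * 2 = d * (if p = q then 2 else 0)" by (simp add: hs_inner1_smult1 hs_inner1_pmat)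
  with assms(2) show ?thesis by (auto split: if_splits)
qed

lemma pmat_neq_smult1_0: "pmat p \<noteq> smult1 0 A"
  using smult1_pmat_eqD[of 1 p 0] by (auto simp: smult1_def fun_eq_iff)

text \<open>Two-qubit Pauli labels form the group \<open>(\<int>/2)\<^sup>4\<close> under \<open>pauli2_mul\<close>; \<open>anticomm2\<close> is the
  symplectic form, recording whether the corresponding matrices anticommute.\<close>

definition pmat2 :: "pauli \<times> pauli \<Rightarrow> mat2" where
  "pmat2 r = tensor (pmat (fst r)) (pmat (snd r))"

definition pauli2_mul :: "pauli \<times> pauli \<Rightarrow> pauli \<times> pauli \<Rightarrow> pauli \<times> pauli" where
  "pauli2_mul r s = (pauli_mul (fst r) (fst s), pauli_mul (snd r) (snd s))"

definition anticomm2 :: "pauli \<times> pauli \<Rightarrow> pauli \<times> pauli \<Rightarrow> bool" where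
  "anticomm2 r s \<longleftrightarrow> anticomm (fst r) (fst s) \<noteq> anticomm (snd r) (snd s)"

lemma pauli2_mul_self [simp]: "pauli2_mul r r = (PI,PI)"
  by (simp add: pauli2_mul_def)

lemma pauli2_mul_eq_II_iff: "pauli2_mul r s = (PI,PI) \<longleftrightarrow> r = s"
  by (cases r; cases s; simp add: pauli2_mul_def pauli_mul_eq_PI_iff)

lemma hs_inner2_pmat2: "hs_inner2 (pmat2 r) (pmat2 s) = (if r = s then 4 else 0)"
  by (cases r; cases s; simp add: pmat2_def hs_inner2_tensor hs_inner1_pmat)

lemma smult2_pmat2_eqD:
  assumes "smult2 c (pmat2 r) = smult2 d (pmat2 s)" "c \<noteq> 0"
  shows "r = s \<and> c = d"
proof -
  have "hs_inner2 (pmat2 r) (smult2 c (pmat2 r)) = hs_inner2 (pmat2 r) (smult2 d (pmat2 s))"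
    using assms by simp
  hence "c * 4 = d * (if r = s then 4 else 0)" by (simp add: hs_inner2_smult2 hs_inner2_pmat2)
  with assms(2) show ?thesis by (auto split: if_splits)
qed

lemma pmat2_neq_smult2_0: "pmat2 r \<noteq> smult2 0 A"
  using smult2_pmat2_eqD[of 1 r 0] by (auto simp: smult2_def fun_eq_iff)

lemma pmat2_II: "pmat2 (PI,PI) = id2"
  by (simp add: pmat2_def pmat_PI tensor_id1)

lemma adj2_pmat2 [simp]: "adj2 (pmat2 r) = pmat2 r"
  by (simp add: pmat2_def adj2_tensor)

lemma pmat2_mul:
  "mul2 (pmat2 r) (pmat2 s) = smult2 (pauli_phase (fst r) (fst s) * pauli_phase (snd r) (snd s)) (pmat2 (pauli2_mul r s))"
  by (simp add: pmat2_def tensor_mul1 pmat_mul tensor_smult1 pauli2_mul_def)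

lemma pmat2_mul_self: "mul2 (pmat2 r) (pmat2 r) = id2"
  by (simp add: pmat2_mul pmat2_II) (cases "fst r"; cases "snd r"; simp)

lemma pmat2_commute:
  "mul2 (pmat2 r) (pmat2 s) = smult2 (if anticomm2 r s then -1 else 1) (mul2 (pmat2 s) (pmat2 r))"
proof -
  have "mul2 (pmat2 r) (pmat2 s) = tensor (mul1 (pmat (fst r)) (pmat (fst s))) (mul1 (pmat (snd r)) (pmat (snd s)))"
    by (simp add: pmat2_def tensor_mul1)
  also have "\<dots> = smult2 ((if anticomm (fst r) (fst s) then -1 else 1) * (if anticomm (snd r) (snd s) then -1 else 1))
       (tensor (mul1 (pmat (fst s)) (pmat (fst r))) (mul1 (pmat (snd s)) (pmat (snd r))))"
    by (subst pmat_commute, subst (2) pmat_commute, simp add: tensor_smult1)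
  also have "\<dots> = smult2 (if anticomm2 r s then -1 else 1) (mul2 (pmat2 s) (pmat2 r))"
    by (simp add: pmat2_def tensor_mul1 anticomm2_def)
  finally show ?thesis .
qed

section \<open>The action of Clifford gates on Pauli labels\<close>

definition conj1 :: "mat1 \<Rightarrow> mat1 \<Rightarrow> mat1" where
  "conj1 C M = mul1 (mul1 C M) (adj1 C)"

definition conj2 :: "mat2 \<Rightarrow> mat2 \<Rightarrow> mat2" where
  "conj2 C M = mul2 (mul2 C M) (adj2 C)"

definition act1 :: "mat1 \<Rightarrow> pauli \<Rightarrow> pauli" where
  "act1 a p = (THE q. \<exists>c. conj1 a (pmat p) = smult1 c (pmat q))"

lemma conj1_smult1 [simp]: "conj1 C (smult1 c M) = smult1 c (conj1 C M)"
  by (simp add: conj1_def)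

lemma conj2_smult2 [simp]: "conj2 C (smult2 c M) = smult2 c (conj2 C M)"
  by (simp add: conj2_def)

lemma conj1_inverse: "unitary1 C \<Longrightarrow> mul1 (mul1 (adj1 C) (conj1 C M)) C = M"
  unfolding conj1_def unitary1_def by (simp add: mul1_assoc[symmetric]) (simp add: mul1_assoc)

lemma conj2_inverse: "unitary2 C \<Longrightarrow> mul2 (mul2 (adj2 C) (conj2 C M)) C = M"
  unfolding conj2_def unitary2_def by (simp add: mul2_assoc[symmetric]) (simp add: mul2_assoc)

lemma conj2_mul2: "unitary2 C \<Longrightarrow> conj2 C (mul2 M N) = mul2 (conj2 C M) (conj2 C N)"
  unfolding conj2_def unitary2_def by (metis mul2_assoc mul2_id2(2))

lemma conj2_id2: "unitary2 C \<Longrightarrow> conj2 C id2 = id2"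
  by (simp add: conj2_def unitary2_def)

lemma conj1_mul1: "conj1 (mul1 A B) M = conj1 A (conj1 B M)"
  by (simp add: conj1_def adj1_mul1 mul1_assoc)

lemma conj2_mul2_left: "conj2 (mul2 A B) M = conj2 A (conj2 B M)"
  by (simp add: conj2_def adj2_mul2 mul2_assoc)

lemma conj2_tensor: "conj2 (tensor a b) (pmat2 r) = tensor (conj1 a (pmat (fst r))) (conj1 b (pmat (snd r)))"
  by (simp add: conj2_def conj1_def pmat2_def adj2_tensor tensor_mul1)

lemma clifford1_unitary1: "clifford1 C \<Longrightarrow> unitary1 C"
  by (simp add: clifford1_def)

lemma clifford2_unitary2: "clifford2 C \<Longrightarrow> unitary2 C"
  by (simp add: clifford2_def)

lemma conj1_pmat_nonzero:
  assumes "unitary1 C" "conj1 C (pmat p) = smult1 c (pmat q)"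
  shows "c \<noteq> 0"
proof
  assume "c = 0"
  then have "pmat p = smult1 0 (mul1 (mul1 (adj1 C) (pmat q)) C)"
    using conj1_inverse[OF assms(1), of "pmat p"] assms(2) by simp
  thus False using pmat_neq_smult1_0 by blast
qed

lemma conj2_pmat2_nonzero:
  assumes "unitary2 C" "conj2 C (pmat2 r) = smult2 c (pmat2 s)"
  shows "c \<noteq> 0"
proof
  assume "c = 0"
  then have "pmat2 r = smult2 0 (mul2 (mul2 (adj2 C) (pmat2 s)) C)"
    using conj2_inverse[OF assms(1), of "pmat2 r"] assms(2) by simp
  thus False using pmat2_neq_smult2_0 by blast
qed

lemma act1_eqI:
  assumes "unitary1 C" "conj1 C (pmat p) = smult1 c (pmat q)"
  shows "act1 C p = q"
  unfolding act1_def
proof (rule the_equality)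
  show "\<exists>c. conj1 C (pmat p) = smult1 c (pmat q)" using assms(2) by blast
next
  fix q' assume "\<exists>d. conj1 C (pmat p) = smult1 d (pmat q')"
  then obtain d where "smult1 c (pmat q) = smult1 d (pmat q')" using assms(2) by auto
  thus "q' = q" using smult1_pmat_eqD conj1_pmat_nonzero[OF assms] by metis
qed

lemma gate_act_eqI:
  assumes "unitary2 C" "conj2 C (pmat2 r) = smult2 c (pmat2 s)"
  shows "gate_act C r = s"
  unfolding gate_act_def
proof (rule the_equality)
  show "\<exists>c. mul2 (mul2 C (tensor (pmat (fst r)) (pmat (snd r)))) (adj2 C)
      = smult2 c (tensor (pmat (fst s)) (pmat (snd s)))"
    using assms(2) unfolding conj2_def pmat2_def by blast
next
  fix s' assume "\<exists>d. mul2 (mul2 C (tensor (pmat (fst r)) (pmat (snd r)))) (adj2 C)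
      = smult2 d (tensor (pmat (fst s')) (pmat (snd s')))"
  then obtain d where "smult2 c (pmat2 s) = smult2 d (pmat2 s')"
    using assms(2) unfolding conj2_def pmat2_def by auto
  thus "s' = s" using smult2_pmat2_eqD conj2_pmat2_nonzero[OF assms] by metis
qed

lemma conj1_act1:
  assumes "clifford1 C"
  obtains c where "c \<noteq> 0" "conj1 C (pmat p) = smult1 c (pmat (act1 C p))"
proof -
  obtain c q where e: "conj1 C (pmat p) = smult1 c (pmat q)"
    using assms unfolding clifford1_def conj1_def by blast
  have "unitary1 C" using assms by (rule clifford1_unitary1)
  with e show thesis using that conj1_pmat_nonzero act1_eqI by metis
qed

lemma conj2_gate_act:
  assumes "clifford2 C"
  obtains c where "c \<noteq> 0" "conj2 C (pmat2 r) = smult2 c (pmat2 (gate_act C r))"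
proof -
  obtain c p q where e: "conj2 C (pmat2 r) = smult2 c (pmat2 (p,q))"
    using assms unfolding clifford2_def conj2_def pmat2_def by (metis fst_conv snd_conv)
  have "unitary2 C" using assms by (rule clifford2_unitary2)
  with e show thesis using that conj2_pmat2_nonzero gate_act_eqI by metis
qed

lemma clifford1_act1I:
  assumes "unitary1 C" "\<And>p. \<exists>c. conj1 C (pmat p) = smult1 c (pmat (f p))"
  shows "clifford1 C" "act1 C = f"
proof -
  show "clifford1 C"
    using assms unfolding clifford1_def conj1_def by blast
  show "act1 C = f"
    using assms act1_eqI by blast
qed

lemma clifford2_gate_actI:
  assumes "unitary2 C" "\<And>r. \<exists>c. conj2 C (pmat2 r) = smult2 c (pmat2 (f r))"
  shows "clifford2 C" "gate_act C = f"
proof -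
  show "clifford2 C"
    using assms unfolding clifford2_def conj2_def pmat2_def by (metis fst_conv snd_conv)
  show "gate_act C = f"
    using assms gate_act_eqI by blast
qed

lemma gate_act_II: "clifford2 C \<Longrightarrow> gate_act C (PI,PI) = (PI,PI)"
  by (rule gate_act_eqI[where c = 1]) (auto simp: pmat2_II conj2_id2 clifford2_unitary2)

lemma gate_act_pauli2_mul:
  assumes "clifford2 C"
  shows "gate_act C (pauli2_mul r s) = pauli2_mul (gate_act C r) (gate_act C s)"
proof -
  have u: "unitary2 C" using assms by (rule clifford2_unitary2)
  obtain a where a: "conj2 C (pmat2 r) = smult2 a (pmat2 (gate_act C r))"
    using conj2_gate_act[OF assms] by metis
  obtain b where b: "conj2 C (pmat2 s) = smult2 b (pmat2 (gate_act C s))"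
    using conj2_gate_act[OF assms] by metis
  define \<phi> where "\<phi> = pauli_phase (fst r) (fst s) * pauli_phase (snd r) (snd s)"
  define \<psi> where "\<psi> = pauli_phase (fst (gate_act C r)) (fst (gate_act C s))
    * pauli_phase (snd (gate_act C r)) (snd (gate_act C s))"
  have "smult2 \<phi> (conj2 C (pmat2 (pauli2_mul r s))) = conj2 C (mul2 (pmat2 r) (pmat2 s))"
    by (simp add: pmat2_mul \<phi>_def)
  also have "\<dots> = smult2 (a * b * \<psi>) (pmat2 (pauli2_mul (gate_act C r) (gate_act C s)))"
    by (simp only: conj2_mul2[OF u] a b mul2_smult2 smult2_smult2) (simp add: pmat2_mul \<psi>_def algebra_simps)
  finally have "smult2 (1 / \<phi>) (smult2 \<phi> (conj2 C (pmat2 (pauli2_mul r s))))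
      = smult2 (1 / \<phi>) (smult2 (a * b * \<psi>) (pmat2 (pauli2_mul (gate_act C r) (gate_act C s))))"
    by simp
  hence "conj2 C (pmat2 (pauli2_mul r s))
      = smult2 (a * b * \<psi> / \<phi>) (pmat2 (pauli2_mul (gate_act C r) (gate_act C s)))"
    by (simp add: \<phi>_def)
  thus ?thesis using gate_act_eqI[OF u] by blast
qed

lemma gate_act_pair_mul:
  "clifford2 C \<Longrightarrow> gate_act C (pauli_mul a b, pauli_mul c d) = pauli2_mul (gate_act C (a,c)) (gate_act C (b,d))"
  using gate_act_pauli2_mul[of C "(a,c)" "(b,d)"] by (simp add: pauli2_mul_def)

lemma gate_act_eq_II_iff:
  assumes "clifford2 C"
  shows "gate_act C r = (PI,PI) \<longleftrightarrow> r = (PI,PI)"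
proof
  assume r: "gate_act C r = (PI,PI)"
  have u: "unitary2 C" using assms by (rule clifford2_unitary2)
  obtain a where "conj2 C (pmat2 r) = smult2 a id2"
    using conj2_gate_act[OF assms] r pmat2_II by metis
  hence "smult2 1 (pmat2 r) = smult2 a (pmat2 (PI,PI))"
    using conj2_inverse[OF u, of "pmat2 r"] u by (simp add: pmat2_II unitary2_def)
  thus "r = (PI,PI)" using smult2_pmat2_eqD by (metis one_neq_zero)
qed (simp add: gate_act_II assms)

lemma inj_gate_act: assumes "clifford2 C" shows "inj (gate_act C)"
proof (rule injI)
  fix r s assume "gate_act C r = gate_act C s"
  hence "gate_act C (pauli2_mul r s) = (PI,PI)" using gate_act_pauli2_mul[OF assms] by simp
  thus "r = s" using gate_act_eq_II_iff[OF assms] pauli2_mul_eq_II_iff by blast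
qed

lemma surj_gate_act: "clifford2 C \<Longrightarrow> surj (gate_act C)"
  using finite_UNIV_inj_surj[OF finite_UNIV_pauli_pair inj_gate_act] by blast

lemma anticomm2_gate_act:
  assumes "clifford2 C"
  shows "anticomm2 (gate_act C r) (gate_act C s) = anticomm2 r s"
proof -
  have u: "unitary2 C" using assms by (rule clifford2_unitary2)
  obtain a where a: "a \<noteq> 0" "conj2 C (pmat2 r) = smult2 a (pmat2 (gate_act C r))"
    using conj2_gate_act[OF assms] by metis
  obtain b where b: "b \<noteq> 0" "conj2 C (pmat2 s) = smult2 b (pmat2 (gate_act C s))"
    using conj2_gate_act[OF assms] by metis
  define e where "e = (if anticomm2 r s then -1 else 1::complex)"
  define e' where "e' = (if anticomm2 (gate_act C r) (gate_act C s) then -1 else 1::complex)"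
  define \<psi> where "\<psi> = pauli_phase (fst (gate_act C s)) (fst (gate_act C r))
    * pauli_phase (snd (gate_act C s)) (snd (gate_act C r))"
  define M where "M = mul2 (pmat2 (gate_act C s)) (pmat2 (gate_act C r))"
  have M: "M = smult2 \<psi> (pmat2 (pauli2_mul (gate_act C s) (gate_act C r)))"
    by (simp add: M_def \<psi>_def pmat2_mul)
  have "conj2 C (mul2 (pmat2 r) (pmat2 s)) = smult2 (a * b * e') M"
    by (simp only: conj2_mul2[OF u] a b mul2_smult2 smult2_smult2 e'_def M_def
        pmat2_commute[of "gate_act C r"]) (simp add: algebra_simps)
  moreover have "conj2 C (mul2 (pmat2 r) (pmat2 s)) = smult2 (a * b * e) M"
    by (subst pmat2_commute[of r], simp only: conj2_smult2 e_def conj2_mul2[OF u] a b mul2_smult2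
        smult2_smult2 M_def) (simp add: algebra_simps)
  ultimately have "smult2 (a * b * e' * \<psi>) (pmat2 (pauli2_mul (gate_act C s) (gate_act C r)))
      = smult2 (a * b * e * \<psi>) (pmat2 (pauli2_mul (gate_act C s) (gate_act C r)))"
    by (simp add: M mult.assoc)
  moreover have "a * b * e' * \<psi> \<noteq> 0" using a b by (simp add: e'_def \<psi>_def)
  ultimately have "a * b * e' * \<psi> = a * b * e * \<psi>" using smult2_pmat2_eqD by blast
  hence "e' = e" using a b by (simp add: \<psi>_def)
  thus ?thesis by (simp add: e_def e'_def split: if_splits)
qed

lemma clifford1_mul1:
  assumes "clifford1 A" "clifford1 B"
  shows "clifford1 (mul1 A B)" "act1 (mul1 A B) = act1 A \<circ> act1 B"
proof -
  have "\<exists>c. conj1 (mul1 A B) (pmat p) = smult1 c (pmat ((act1 A \<circ> act1 B) p))" for p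
  proof -
    obtain c1 where "conj1 B (pmat p) = smult1 c1 (pmat (act1 B p))"
      using conj1_act1[OF assms(2)] by metis
    moreover obtain c2 where "conj1 A (pmat (act1 B p)) = smult1 c2 (pmat (act1 A (act1 B p)))"
      using conj1_act1[OF assms(1)] by metis
    ultimately show ?thesis by (auto simp: conj1_mul1)
  qed
  thus "clifford1 (mul1 A B)" "act1 (mul1 A B) = act1 A \<circ> act1 B"
    using clifford1_act1I unitary1_mul1 clifford1_unitary1 assms by blast+
qed

lemma clifford2_mul2:
  assumes "clifford2 A" "clifford2 B"
  shows "clifford2 (mul2 A B)" "gate_act (mul2 A B) = gate_act A \<circ> gate_act B"
proof -
  have "\<exists>c. conj2 (mul2 A B) (pmat2 r) = smult2 c (pmat2 ((gate_act A \<circ> gate_act B) r))" for r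
  proof -
    obtain c1 where "conj2 B (pmat2 r) = smult2 c1 (pmat2 (gate_act B r))"
      using conj2_gate_act[OF assms(2)] by metis
    moreover obtain c2 where "conj2 A (pmat2 (gate_act B r)) = smult2 c2 (pmat2 (gate_act A (gate_act B r)))"
      using conj2_gate_act[OF assms(1)] by metis
    ultimately show ?thesis by (auto simp: conj2_mul2_left)
  qed
  thus "clifford2 (mul2 A B)" "gate_act (mul2 A B) = gate_act A \<circ> gate_act B"
    using clifford2_gate_actI unitary2_mul2 clifford2_unitary2 assms by blast+
qed

lemma clifford2_tensor:
  assumes "clifford1 a" "clifford1 b"
  shows "clifford2 (tensor a b)" "gate_act (tensor a b) = map_prod (act1 a) (act1 b)"
proof -
  have "\<exists>c. conj2 (tensor a b) (pmat2 r) = smult2 c (pmat2 (map_prod (act1 a) (act1 b) r))" for r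
  proof -
    obtain c1 where "conj1 a (pmat (fst r)) = smult1 c1 (pmat (act1 a (fst r)))"
      using conj1_act1[OF assms(1)] by metis
    moreover obtain c2 where "conj1 b (pmat (snd r)) = smult1 c2 (pmat (act1 b (snd r)))"
      using conj1_act1[OF assms(2)] by metis
    ultimately have "conj2 (tensor a b) (pmat2 r) = smult2 (c1 * c2) (pmat2 (map_prod (act1 a) (act1 b) r))"
      by (simp only: conj2_tensor) (simp add: tensor_smult1 pmat2_def)
    thus ?thesis by blast
  qed
  thus "clifford2 (tensor a b)" "gate_act (tensor a b) = map_prod (act1 a) (act1 b)"
    using clifford2_gate_actI unitary2_tensor clifford1_unitary1 assms by blast+
qed

lemma clifford1_pmat: "clifford1 (pmat p)"
proof -
  have "unitary1 (pmat p)"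
    unfolding unitary1_def by (simp add: pmat_mul pmat_PI[symmetric]) (cases p; simp)
  moreover have "\<exists>c q. mul1 (mul1 (pmat p) (pmat r)) (adj1 (pmat p)) = smult1 c (pmat q)" for r
    by (auto simp: pmat_mul mul1_assoc)
  ultimately show ?thesis by (simp add: clifford1_def)
qed

lemma clifford1_id1: "clifford1 id1" "act1 id1 = id"
proof -
  have "adj1 id1 = id1" using adj1_pmat[of PI] by (simp add: pmat_PI)
  hence "conj1 id1 (pmat p) = smult1 1 (pmat (id p))" for p by (simp add: conj1_def)
  moreover have "unitary1 id1"
    using clifford1_unitary1 clifford1_pmat[of PI] by (simp add: pmat_PI)
  ultimately show "clifford1 id1" "act1 id1 = id"
    using clifford1_act1I[of id1 id] by blast+
qed

definition z_if_flip :: "pauli \<Rightarrow> pauli" where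
  "z_if_flip p = (if p = PX \<or> p = PY then PZ else PI)"

definition cz_act :: "pauli \<times> pauli \<Rightarrow> pauli \<times> pauli" where
  "cz_act r = (pauli_mul (fst r) (z_if_flip (snd r)), pauli_mul (snd r) (z_if_flip (fst r)))"

lemma clifford2_CZ: "clifford2 CZ" "gate_act CZ = cz_act"
proof -
  have "unitary2 CZ"
    by (auto simp: unitary2_def fun_eq_iff mul2_def adj2_def CZ_def id2_def sum_UNIV_bool_pair)
  moreover have "\<exists>c. conj2 CZ (pmat2 (p,q)) = smult2 c (pmat2 (cz_act (p,q)))" for p q
    by (rule exI[of _ "if (p,q) = (PX,PY) \<or> (p,q) = (PY,PX) then -1 else 1"],
        cases p; cases q; simp add: fun_eq_iff conj2_def mul2_def adj2_def CZ_def smult2_def pmat2_def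
          tensor_def pmat_def id1_def cz_act_def z_if_flip_def sum_UNIV_bool_pair split: prod.split)
  ultimately show "clifford2 CZ" "gate_act CZ = cz_act"
    using clifford2_gate_actI[of CZ cz_act] by auto
qed

definition S_gate :: mat1 where
  "S_gate = (\<lambda>i j. if i \<noteq> j then 0 else if i then \<i> else 1)"

definition H_gate :: mat1 where
  "H_gate = (\<lambda>i j. (if i \<and> j then -1 else 1) * ((1 + \<i>) / 2))"

definition swap_XY :: "pauli \<Rightarrow> pauli" where
  "swap_XY p = (if p = PX then PY else if p = PY then PX else p)"

definition swap_XZ :: "pauli \<Rightarrow> pauli" where
  "swap_XZ p = (if p = PX then PZ else if p = PZ then PX else p)"

lemma clifford1_S_gate: "clifford1 S_gate" "act1 S_gate = swap_XY"
proof -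
  have "unitary1 S_gate"
    by (auto simp: unitary1_def fun_eq_iff mul1_def adj1_def S_gate_def id1_def sum_UNIV_bool)
  moreover have "\<exists>c. conj1 S_gate (pmat p) = smult1 c (pmat (swap_XY p))" for p
    by (rule exI[of _ "if p = PY then -1 else 1"], cases p; simp add: fun_eq_iff conj1_def mul1_def
        adj1_def S_gate_def smult1_def pmat_def id1_def swap_XY_def sum_UNIV_bool)
  ultimately show "clifford1 S_gate" "act1 S_gate = swap_XY"
    using clifford1_act1I[of S_gate swap_XY] by auto
qed

lemma clifford1_H_gate: "clifford1 H_gate" "act1 H_gate = swap_XZ"
proof -
  have "unitary1 H_gate"
    unfolding unitary1_def
    by (simp add: fun_eq_iff mul1_def adj1_def H_gate_def id1_def sum_UNIV_bool) (simp add: field_simps)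
  moreover have "\<exists>c. conj1 H_gate (pmat p) = smult1 c (pmat (swap_XZ p))" for p
    by (rule exI[of _ "if p = PY then -1 else 1"], cases p; simp add: fun_eq_iff conj1_def mul1_def
        adj1_def H_gate_def smult1_def pmat_def id1_def swap_XZ_def sum_UNIV_bool; simp add: field_simps)
  ultimately show "clifford1 H_gate" "act1 H_gate = swap_XZ"
    using clifford1_act1I[of H_gate swap_XZ] by auto
qed

section \<open>Gates with the same action differ by a Pauli\<close>

lemma scalar_if_commutes_with_pauli_generators:
  assumes "\<And>g. g \<in> {(PX,PI), (PZ,PI), (PI,PX), (PI,PZ)} \<Longrightarrow> mul2 W (pmat2 g) = mul2 (pmat2 g) W"
  shows "W = smult2 (W (False,False) (False,False)) id2"
proof -
  have entry: "mul2 W (pmat2 g) i k = mul2 (pmat2 g) W i k"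
    if "g \<in> {(PX,PI), (PZ,PI), (PI,PX), (PI,PZ)}" for g i k
    using assms[OF that] by simp
  note entry_simps = mul2_def pmat2_def tensor_def pmat_def id1_def sum_UNIV_bool_pair
  have offdiag: "W (a,b) (c,d) = 0" if "(a,b) \<noteq> (c,d)" for a b c d
    using that entry[of "(PZ,PI)" "(a,b)" "(c,d)"] entry[of "(PI,PZ)" "(a,b)" "(c,d)"]
    by (cases a; cases b; cases c; cases d; simp add: entry_simps)
  have diag: "W (a,b) (a,b) = W (False,False) (False,False)" for a b
    using entry[of "(PX,PI)" "(False,False)" "(True,False)"] entry[of "(PI,PX)" "(False,False)" "(False,True)"]
      entry[of "(PI,PX)" "(True,False)" "(True,True)"]
    by (cases a; cases b; simp add: entry_simps)
  show ?thesis
    using offdiag diag by (auto simp: fun_eq_iff smult2_def id2_def)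
qed

lemma anticomm_prescribed: "\<exists>p. anticomm p PX = b1 \<and> anticomm p PZ = b2"
  by (cases b1; cases b2) (rule exI[of _ PY] exI[of _ PZ] exI[of _ PX] exI[of _ PI], simp add: anticomm_def)+

text \<open>Multiplying by the Pauli with the matching commutation pattern on the generators leaves
  a scalar.\<close>

lemma pauli_multiple_if_commutes_up_to_sign:
  assumes comm: "\<And>r. mul2 V (pmat2 r) = smult2 (\<sigma> r) (mul2 (pmat2 r) V)"
    and sign: "\<And>r. \<sigma> r = 1 \<or> \<sigma> r = -1"
  shows "\<exists>c s. V = smult2 c (pmat2 s)"
proof -
  obtain p where p: "anticomm p PX = (\<sigma> (PX,PI) = -1)" "anticomm p PZ = (\<sigma> (PZ,PI) = -1)"
    using anticomm_prescribed by blast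
  obtain q where q: "anticomm q PX = (\<sigma> (PI,PX) = -1)" "anticomm q PZ = (\<sigma> (PI,PZ) = -1)"
    using anticomm_prescribed by blast
  define W where "W = mul2 V (pmat2 (p,q))"
  have "mul2 W (pmat2 g) = mul2 (pmat2 g) W" if "anticomm2 (p,q) g = (\<sigma> g = -1)" for g
  proof -
    have "mul2 W (pmat2 g) = smult2 (if anticomm2 (p,q) g then -1 else 1) (mul2 (mul2 V (pmat2 g)) (pmat2 (p,q)))"
      by (simp add: W_def mul2_assoc pmat2_commute[of "(p,q)"])
    also have "\<dots> = smult2 ((if anticomm2 (p,q) g then -1 else 1) * \<sigma> g) (mul2 (pmat2 g) W)"
      by (simp add: comm W_def mul2_assoc)
    also have "\<dots> = mul2 (pmat2 g) W" using that sign[of g] by auto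
    finally show ?thesis .
  qed
  hence "W = smult2 (W (False,False) (False,False)) id2"
    by (intro scalar_if_commutes_with_pauli_generators) (auto simp: anticomm2_def p q)
  hence "V = smult2 (W (False,False) (False,False)) (pmat2 (p,q))"
    by (metis W_def pmat2_mul_self mul2_assoc mul2_id2(1) mul2_id2(2) mul2_smult2(2))
  thus ?thesis by blast
qed

lemma sign_commutation_if_conj2_fixes_labels:
  assumes V: "unitary2 V" and \<sigma>: "\<And>r. conj2 V (pmat2 r) = smult2 (\<sigma> r) (pmat2 r)"
  shows "mul2 V (pmat2 r) = smult2 (\<sigma> r) (mul2 (pmat2 r) V)" "\<sigma> r = 1 \<or> \<sigma> r = -1"
proof -
  have "mul2 (adj2 V) V = id2" using V unitary2_def by blast
  hence "mul2 V (pmat2 r) = mul2 (conj2 V (pmat2 r)) V"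
    by (simp add: conj2_def mul2_assoc)
  thus "mul2 V (pmat2 r) = smult2 (\<sigma> r) (mul2 (pmat2 r) V)" using \<sigma> by simp
  have "smult2 1 (pmat2 (PI,PI)) = smult2 (\<sigma> r * \<sigma> r) (pmat2 (PI,PI))"
    using conj2_mul2[OF V, of "pmat2 r" "pmat2 r"]
    by (simp add: \<sigma> pmat2_mul_self conj2_id2[OF V] pmat2_II mult.commute)
  hence "\<sigma> r * \<sigma> r = 1" using smult2_pmat2_eqD by (metis one_neq_zero)
  thus "\<sigma> r = 1 \<or> \<sigma> r = -1" by (metis square_eq_1_iff power2_eq_square)
qed

lemma pauli_factor_if_same_gate_act:
  assumes G: "clifford2 G" and K: "clifford2 K" and same: "gate_act G = gate_act K"
  shows "\<exists>c r. G = smult2 c (mul2 K (pmat2 r))"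
proof -
  have uG: "unitary2 G" and uK: "unitary2 K" using G K clifford2_unitary2 by auto
  define V where "V = mul2 (adj2 K) G"
  have "unitary2 (adj2 K)" using uK by (auto simp: unitary2_def)
  hence uV: "unitary2 V" unfolding V_def using uG by (rule unitary2_mul2)
  have "\<exists>l. conj2 V (pmat2 r) = smult2 l (pmat2 r)" for r
  proof -
    obtain a where a: "conj2 G (pmat2 r) = smult2 a (pmat2 (gate_act K r))"
      using conj2_gate_act[OF G, of r] same by metis
    obtain b where b: "b \<noteq> 0" "conj2 K (pmat2 r) = smult2 b (pmat2 (gate_act K r))"
      using conj2_gate_act[OF K, of r] by metis
    have "pmat2 r = smult2 b (mul2 (mul2 (adj2 K) (pmat2 (gate_act K r))) K)"
      using conj2_inverse[OF uK, of "pmat2 r"] b by simp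
    moreover have "conj2 V (pmat2 r) = mul2 (mul2 (adj2 K) (conj2 G (pmat2 r))) K"
      by (simp add: conj2_def V_def adj2_mul2 mul2_assoc)
    hence "conj2 V (pmat2 r) = smult2 a (mul2 (mul2 (adj2 K) (pmat2 (gate_act K r))) K)"
      by (simp add: a)
    ultimately have "conj2 V (pmat2 r) = smult2 (a / b) (pmat2 r)"
      using b(1) by simp
    thus ?thesis by blast
  qed
  then obtain \<sigma> where "\<And>r. conj2 V (pmat2 r) = smult2 (\<sigma> r) (pmat2 r)" by metis
  then obtain c s where "V = smult2 c (pmat2 s)"
    using pauli_multiple_if_commutes_up_to_sign sign_commutation_if_conj2_fixes_labels[OF uV] by metis
  moreover have "G = mul2 K V" using uK unfolding V_def unitary2_def by (simp add: mul2_assoc[symmetric])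
  ultimately show ?thesis by (metis mul2_smult2(1))
qed

section \<open>Symplectic automorphisms of the two-qubit Pauli labels\<close>

text \<open>Every \<open>pauli_perm\<close> is the action of a single-qubit Clifford (\<open>pauli_perm_act1\<close>), so
  \<open>cz_like\<close> and \<open>local_like\<close> describe the actions of the \<open>CZ\<close> and the product class.\<close>

definition pauli_perm :: "(pauli \<Rightarrow> pauli) \<Rightarrow> bool" where
  "pauli_perm s \<longleftrightarrow> bij s \<and> s PI = PI"

definition pauli2_hom :: "(pauli \<times> pauli \<Rightarrow> pauli \<times> pauli) \<Rightarrow> bool" where
  "pauli2_hom f \<longleftrightarrow> (\<forall>r s. f (pauli2_mul r s) = pauli2_mul (f r) (f s))"

definition symplectic :: "(pauli \<times> pauli \<Rightarrow> pauli \<times> pauli) \<Rightarrow> bool" where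
  "symplectic f \<longleftrightarrow> pauli2_hom f \<and> (\<forall>r s. anticomm2 (f r) (f s) = anticomm2 r s) \<and> inj f"

definition cz_like :: "(pauli \<times> pauli \<Rightarrow> pauli \<times> pauli) \<Rightarrow> bool" where
  "cz_like f \<longleftrightarrow> (\<exists>s1 s2 s3 s4. pauli_perm s1 \<and> pauli_perm s2 \<and> pauli_perm s3 \<and> pauli_perm s4 \<and>
     f = map_prod s1 s2 \<circ> cz_act \<circ> map_prod s3 s4)"

definition local_like :: "(pauli \<times> pauli \<Rightarrow> pauli \<times> pauli) \<Rightarrow> bool" where
  "local_like f \<longleftrightarrow> (\<exists>s1 s2. pauli_perm s1 \<and> pauli_perm s2 \<and> f = map_prod s1 s2)"

lemma pauli_perm_eq_iff: "pauli_perm s \<Longrightarrow> s x = s y \<longleftrightarrow> x = y"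
  unfolding pauli_perm_def bij_def inj_def by blast

lemma pauli_perm_eq_PI_iff: "pauli_perm s \<Longrightarrow> s x = PI \<longleftrightarrow> x = PI"
  using pauli_perm_eq_iff[of s x PI] unfolding pauli_perm_def by simp

lemma pauli_mul_distinct:
  "x \<noteq> PI \<Longrightarrow> y \<noteq> PI \<Longrightarrow> z \<noteq> PI \<Longrightarrow> x \<noteq> y \<Longrightarrow> x \<noteq> z \<Longrightarrow> y \<noteq> z \<Longrightarrow> pauli_mul x y = z"
  by (cases x; cases y; cases z; simp)

lemma pauli_perm_pauli_mul:
  assumes "pauli_perm s"
  shows "s (pauli_mul p q) = pauli_mul (s p) (s q)"
proof (cases "p = PI \<or> q = PI \<or> p = q")
  case True
  thus ?thesis using assms by (auto simp: pauli_perm_def)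
next
  case False
  hence "pauli_mul p q \<noteq> PI \<and> pauli_mul p q \<noteq> p \<and> pauli_mul p q \<noteq> q"
    by (cases p; cases q; simp)
  thus ?thesis
    using False pauli_mul_distinct[of "s p" "s q" "s (pauli_mul p q)"]
      pauli_perm_eq_iff[OF assms] pauli_perm_eq_PI_iff[OF assms] by metis
qed

lemma pauli_perm_anticomm: "pauli_perm s \<Longrightarrow> anticomm (s p) (s q) = anticomm p q"
  unfolding anticomm_def using pauli_perm_eq_iff pauli_perm_eq_PI_iff by metis

lemma pauli_perm_id: "pauli_perm id"
  by (simp add: pauli_perm_def)

lemma pauli_perm_comp: "pauli_perm s \<Longrightarrow> pauli_perm t \<Longrightarrow> pauli_perm (s \<circ> t)"
  unfolding pauli_perm_def using bij_comp by auto

lemma pauli_perm_inv: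
  assumes "pauli_perm s"
  shows "pauli_perm (inv s)" "s \<circ> inv s = id" "inv s \<circ> s = id"
proof -
  have s: "bij s" "s PI = PI" using assms pauli_perm_def by auto
  show "pauli_perm (inv s)" unfolding pauli_perm_def using s bij_imp_bij_inv by (metis bij_def inv_f_f)
  show "s \<circ> inv s = id" using bij_is_surj[OF s(1)] surj_iff by blast
  show "inv s \<circ> s = id" using bij_is_inj[OF s(1)] inj_iff by blast
qed

lemma pauli_perm_inv_apply: "pauli_perm s \<Longrightarrow> inv s (s x) = x"
  unfolding pauli_perm_def by (simp add: bij_is_inj)

lemma pauli_perm_eqI:
  assumes "pauli_perm s" "pauli_perm t" "s PX = t PX" "s PZ = t PZ"
  shows "s = t"
proof
  fix p
  have "s PY = t PY"
    using pauli_perm_pauli_mul[OF assms(1), of PX PZ] pauli_perm_pauli_mul[OF assms(2), of PX PZ] assms(3,4)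
    by simp
  thus "s p = t p" using assms by (cases p) (auto simp: pauli_perm_def)
qed

lemma pauli_perm_exists:
  assumes "u \<noteq> PI" "v \<noteq> PI" "u \<noteq> v"
  obtains s where "pauli_perm s" "s PX = u" "s PZ = v"
proof -
  define s where "s p = (case p of PI \<Rightarrow> PI | PX \<Rightarrow> u | PZ \<Rightarrow> v | PY \<Rightarrow> pauli_mul u v)" for p
  have "inj s"
    by (rule injI) (use assms in \<open>simp add: s_def split: pauli.splits; cases u; cases v; simp\<close>)
  moreover have "surj s" using finite_UNIV_inj_surj[OF finite_UNIV_pauli \<open>inj s\<close>] .
  ultimately have "pauli_perm s" by (simp add: pauli_perm_def bij_def) (simp add: s_def)
  thus thesis using that by (simp add: s_def)
qed

lemma pauli_perm_to_Z:
  assumes "v \<noteq> PI"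
  obtains s where "pauli_perm s" "s PZ = v"
proof -
  have "(if v = PX then PZ else PX) \<noteq> PI" "(if v = PX then PZ else PX) \<noteq> v" using assms by auto
  with assms show thesis using that pauli_perm_exists by metis
qed

lemma pauli_perm_fixing_Z:
  assumes "anticomm x PZ"
  obtains s where "pauli_perm s" "s PX = x" "s PZ = PZ"
  using pauli_perm_exists[of x PZ] assms by (auto simp: anticomm_def)

lemma pauli_perm_involution: "f \<circ> f = id \<Longrightarrow> f PI = PI \<Longrightarrow> pauli_perm f"
  unfolding pauli_perm_def using o_bij by blast

lemma pauli_perm_act1:
  assumes "pauli_perm s"
  obtains l where "clifford1 l" "act1 l = s"
proof -
  have images: "s PX \<noteq> PI" "s PZ \<noteq> PI" "s PX \<noteq> s PZ"
    using pauli_perm_eq_PI_iff[OF assms] pauli_perm_eq_iff[OF assms] by auto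
  have XY: "pauli_perm swap_XY" and XZ: "pauli_perm swap_XZ"
    by (auto intro!: pauli_perm_involution simp: fun_eq_iff swap_XY_def swap_XZ_def)
  note S = clifford1_S_gate and H = clifford1_H_gate
  note HS = clifford1_mul1[OF H(1) S(1)] and SH = clifford1_mul1[OF S(1) H(1)]
  note HSH = clifford1_mul1[OF H(1) SH(1)]
  have "\<exists>l. clifford1 l \<and> pauli_perm (act1 l) \<and> act1 l PX = s PX \<and> act1 l PZ = s PZ"
    using images
    by (cases "s PX"; cases "s PZ")
      (simp_all, (metis clifford1_id1 S H HS SH HSH XY XZ pauli_perm_id pauli_perm_comp
          swap_XY_def swap_XZ_def comp_apply id_apply pauli.distinct)+)
  then obtain l where "clifford1 l" "pauli_perm (act1 l)" "act1 l PX = s PX" "act1 l PZ = s PZ"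
    by blast
  thus thesis using that pauli_perm_eqI[OF _ assms] by metis
qed

lemma symplectic_map_prod: "pauli_perm s \<Longrightarrow> pauli_perm t \<Longrightarrow> symplectic (map_prod s t)"
  unfolding symplectic_def pauli2_hom_def
  by (auto simp: pauli2_mul_def pauli_perm_pauli_mul anticomm2_def pauli_perm_anticomm inj_def
      pauli_perm_eq_iff)

lemma symplectic_comp: "symplectic f \<Longrightarrow> symplectic g \<Longrightarrow> symplectic (f \<circ> g)"
  unfolding symplectic_def pauli2_hom_def comp_def by (metis inj_compose[unfolded comp_def])

lemma symplectic_gate_act: "clifford2 C \<Longrightarrow> symplectic (gate_act C)"
  unfolding symplectic_def pauli2_hom_def
  using gate_act_pauli2_mul anticomm2_gate_act inj_gate_act by blast

lemma pauli2_hom_II: "pauli2_hom f \<Longrightarrow> f (PI,PI) = (PI,PI)"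
  unfolding pauli2_hom_def by (metis pauli2_mul_self)

lemma pauli2_hom_eqI:
  assumes "pauli2_hom f" "pauli2_hom g"
    "f (PX,PI) = g (PX,PI)" "f (PZ,PI) = g (PZ,PI)" "f (PI,PX) = g (PI,PX)" "f (PI,PZ) = g (PI,PZ)"
  shows "f = g"
proof
  fix r
  have hom: "f (pauli2_mul r s) = pauli2_mul (f r) (f s)" "g (pauli2_mul r s) = pauli2_mul (g r) (g s)" for r s
    using assms(1,2) unfolding pauli2_hom_def by blast+
  have "(PY,PI) = pauli2_mul (PX,PI) (PZ,PI)" "(PI,PY) = pauli2_mul (PI,PX) (PI,PZ)"
    by (simp_all add: pauli2_mul_def)
  hence "f (p,PI) = g (p,PI) \<and> f (PI,p) = g (PI,p)" for p
    using assms hom pauli2_hom_II[OF assms(1)] pauli2_hom_II[OF assms(2)] by (cases p) metis+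
  moreover have "r = pauli2_mul (fst r, PI) (PI, snd r)" by (simp add: pauli2_mul_def)
  ultimately show "f r = g r" using hom by metis
qed

lemma cz_like_cancel_local:
  assumes "pauli_perm a" "pauli_perm b" "pauli_perm c" "pauli_perm d"
    and "cz_like (map_prod a b \<circ> f \<circ> map_prod c d)"
  shows "cz_like f"
proof -
  obtain s1 s2 s3 s4 where s: "pauli_perm s1" "pauli_perm s2" "pauli_perm s3" "pauli_perm s4"
    and e: "map_prod a b \<circ> f \<circ> map_prod c d = map_prod s1 s2 \<circ> cz_act \<circ> map_prod s3 s4"
    using assms(5) cz_like_def by blast
  have "f = map_prod (inv a) (inv b) \<circ> (map_prod a b \<circ> f \<circ> map_prod c d) \<circ> map_prod (inv c) (inv d)"
    by (simp add: o_assoc map_prod.comp pauli_perm_inv assms map_prod.id)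
      (simp add: o_assoc[symmetric] map_prod.comp pauli_perm_inv assms map_prod.id)
  also have "\<dots> = map_prod (inv a \<circ> s1) (inv b \<circ> s2) \<circ> cz_act \<circ> map_prod (s3 \<circ> inv c) (s4 \<circ> inv d)"
    unfolding e by (simp add: o_assoc map_prod.comp) (simp add: o_assoc[symmetric] map_prod.comp)
  finally show ?thesis
    unfolding cz_like_def using s assms pauli_perm_inv pauli_perm_comp by metis
qed

lemma local_like_cancel_local:
  assumes "pauli_perm a" "pauli_perm b" "pauli_perm c" "pauli_perm d"
    and "local_like (map_prod a b \<circ> f \<circ> map_prod c d)"
  shows "local_like f"
proof -
  obtain s1 s2 where s: "pauli_perm s1" "pauli_perm s2"
    and e: "map_prod a b \<circ> f \<circ> map_prod c d = map_prod s1 s2"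
    using assms(5) local_like_def by blast
  have "f = map_prod (inv a) (inv b) \<circ> (map_prod a b \<circ> f \<circ> map_prod c d) \<circ> map_prod (inv c) (inv d)"
    by (simp add: o_assoc map_prod.comp pauli_perm_inv assms map_prod.id)
      (simp add: o_assoc[symmetric] map_prod.comp pauli_perm_inv assms map_prod.id)
  also have "\<dots> = map_prod (inv a \<circ> s1 \<circ> inv c) (inv b \<circ> s2 \<circ> inv d)"
    unfolding e by (simp add: map_prod.comp)
  finally show ?thesis
    unfolding local_like_def using s assms pauli_perm_inv pauli_perm_comp by metis
qed

lemma symplecticD:
  assumes "symplectic g"
  shows "g (pauli2_mul r s) = pauli2_mul (g r) (g s)" "anticomm2 (g r) (g s) = anticomm2 r s" "inj g"
    "g (PI,PI) = (PI,PI)"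
  using assms pauli2_hom_II unfolding symplectic_def pauli2_hom_def by blast+

lemma symplectic_fixing_ZI_right_part:
  assumes g: "symplectic g" and gZ: "g (PZ,PI) = (PZ,PI)"
  shows "fst (g (PI,q)) \<in> {PI, PZ}" "pauli_perm (\<lambda>q. snd (g (PI,q)))"
proof -
  note hom = symplecticD(1)[OF g] and form = symplecticD(2)[OF g] and gII = symplecticD(4)[OF g]
  have left: "fst (g (PI,q)) \<in> {PI, PZ}" for q
  proof -
    have "\<not> anticomm (fst (g (PI,q))) PZ"
      using form[of "(PI,q)" "(PZ,PI)"] by (simp add: gZ anticomm2_def)
    thus ?thesis by (auto simp: anticomm_def)
  qed
  thus "fst (g (PI,q)) \<in> {PI, PZ}" .
  define \<rho> where "\<rho> q = snd (g (PI,q))" for q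
  have "inj \<rho>"
  proof (rule injI)
    fix q1 q2 assume "\<rho> q1 = \<rho> q2"
    hence "snd (g (PI, pauli_mul q1 q2)) = PI"
      using hom[of "(PI,q1)" "(PI,q2)"] by (simp add: \<rho>_def pauli2_mul_def)
    hence "g (PI, pauli_mul q1 q2) = g (PI,PI) \<or> g (PI, pauli_mul q1 q2) = g (PZ,PI)"
      using left[of "pauli_mul q1 q2"] gII gZ by (auto simp: prod_eq_iff)
    hence "(PI, pauli_mul q1 q2) = (PI,PI)"
      using injD[OF symplecticD(3)[OF g]] by blast
    thus "q1 = q2" by (simp add: pauli_mul_eq_PI_iff)
  qed
  moreover have "\<rho> PI = PI" using gII by (simp add: \<rho>_def)
  ultimately show "pauli_perm \<rho>"
    using finite_UNIV_inj_surj[OF finite_UNIV_pauli] by (simp add: pauli_perm_def bij_def)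
qed

lemma symplectic_fixing_ZI_local_like:
  assumes g: "symplectic g" and gZ: "g (PZ,PI) = (PZ,PI)" and left: "\<And>q. fst (g (PI,q)) = PI"
  shows "local_like g"
proof -
  note form = symplecticD(2)[OF g]
  define \<rho> where "\<rho> q = snd (g (PI,q))" for q
  have \<rho>: "pauli_perm \<rho>" using symplectic_fixing_ZI_right_part(2)[OF g gZ] by (simp add: \<rho>_def[abs_def])
  have gI: "g (PI,q) = (PI, \<rho> q)" for q using left[of q] by (simp add: \<rho>_def prod_eq_iff)
  obtain x r where gX: "g (PX,PI) = (x,r)" by force
  obtain qx qz where "\<rho> qx = PX" "\<rho> qz = PZ"
    using \<rho> unfolding pauli_perm_def by (metis bij_pointE)
  hence "\<not> anticomm r PX" "\<not> anticomm r PZ"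
    using form[of "(PX,PI)" "(PI,qx)"] form[of "(PX,PI)" "(PI,qz)"] by (simp_all add: gX gI anticomm2_def)
  hence r: "r = PI" by (cases r) (auto simp: anticomm_def)
  have "anticomm x PZ"
    using form[of "(PX,PI)" "(PZ,PI)"] by (simp add: gX gZ anticomm2_def anticomm_def)
  then obtain \<mu> where \<mu>: "pauli_perm \<mu>" "\<mu> PX = x" "\<mu> PZ = PZ" by (rule pauli_perm_fixing_Z)
  have "g = map_prod \<mu> \<rho>"
    using g symplectic_map_prod[OF \<mu>(1) \<rho>] \<mu> \<rho> gX r gZ gI
    by (intro pauli2_hom_eqI) (auto simp: symplectic_def pauli_perm_def)
  thus ?thesis using \<mu>(1) \<rho> local_like_def by blast
qed

lemma symplectic_cz_normal_form:
  assumes g: "symplectic g"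
    and gZI: "g (PZ,PI) = (PZ,PI)" and gIZ: "g (PI,PZ) = (PI,PZ)" and gIX: "g (PI,PX) = (PZ,PX)"
  shows "cz_like g"
proof -
  note form = symplecticD(2)[OF g]
  obtain x r where gX: "g (PX,PI) = (x,r)" by force
  have x: "anticomm x PZ"
    using form[of "(PX,PI)" "(PZ,PI)"] by (simp add: gX gZI anticomm2_def anticomm_def)
  moreover have "\<not> anticomm r PZ" "anticomm x PZ = anticomm r PX"
    using form[of "(PX,PI)" "(PI,PZ)"] form[of "(PX,PI)" "(PI,PX)"] by (simp_all add: gX gIZ gIX anticomm2_def)
  ultimately have r: "r = PZ" by (cases r) (auto simp: anticomm_def)
  obtain \<mu> where \<mu>: "pauli_perm \<mu>" "\<mu> PX = x" "\<mu> PZ = PZ" using x by (rule pauli_perm_fixing_Z)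
  have "symplectic (map_prod \<mu> id \<circ> cz_act)"
    using symplectic_comp symplectic_map_prod[OF \<mu>(1) pauli_perm_id] symplectic_gate_act clifford2_CZ
    by metis
  hence "g = map_prod \<mu> id \<circ> cz_act"
    using g \<mu> gX r gZI gIZ gIX
    by (intro pauli2_hom_eqI) (auto simp: symplectic_def pauli_perm_def cz_act_def z_if_flip_def)
  thus ?thesis unfolding cz_like_def using \<mu>(1) pauli_perm_id by (metis map_prod.id o_id)
qed

lemma symplectic_fixing_ZI_cz_like:
  assumes g: "symplectic g" and gZ: "g (PZ,PI) = (PZ,PI)" and left: "fst (g (PI,q0)) \<noteq> PI"
  shows "cz_like g"
proof -
  define \<chi> where "\<chi> q = fst (g (PI,q))" for q
  define \<rho> where "\<rho> q = snd (g (PI,q))" for q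
  have \<chi>: "\<chi> q \<in> {PI, PZ}" for q
    using symplectic_fixing_ZI_right_part(1)[OF g gZ] by (simp add: \<chi>_def)
  have \<rho>: "pauli_perm \<rho>" using symplectic_fixing_ZI_right_part(2)[OF g gZ] by (simp add: \<rho>_def[abs_def])
  have gI: "g (PI,q) = (\<chi> q, \<rho> q)" for q by (simp add: \<chi>_def \<rho>_def)
  have \<chi>_PY: "\<chi> PY = pauli_mul (\<chi> PX) (\<chi> PZ)" and \<chi>_PI: "\<chi> PI = PI"
    using symplecticD(1)[OF g, of "(PI,PX)" "(PI,PZ)"] symplecticD(4)[OF g]
    by (simp_all add: \<chi>_def pauli2_mul_def)
  have "\<exists>k m. k \<noteq> PI \<and> m \<noteq> PI \<and> k \<noteq> m \<and> \<chi> k = PI \<and> \<chi> m = PZ"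
  proof -
    have "\<chi> PX = PZ \<or> \<chi> PZ = PZ"
      using left \<chi>[of q0] \<chi>[of PZ] \<chi>_PY \<chi>_PI by (cases q0) (auto simp: \<chi>_def)
    thus ?thesis using \<chi>[of PX] \<chi>[of PZ] \<chi>_PY by (metis insertE singletonD pauli.distinct pauli_mul.simps)
  qed
  then obtain k m where km: "k \<noteq> PI" "m \<noteq> PI" "k \<noteq> m" "\<chi> k = PI" "\<chi> m = PZ" by blast
  obtain \<tau> where \<tau>: "pauli_perm \<tau>" "\<tau> PX = m" "\<tau> PZ = k" using km by (metis pauli_perm_exists)
  define \<sigma> where "\<sigma> = \<rho> \<circ> \<tau>"
  have \<sigma>: "pauli_perm \<sigma>" using \<sigma>_def pauli_perm_comp \<rho> \<tau>(1) by blast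
  define g' where "g' = map_prod id (inv \<sigma>) \<circ> g \<circ> map_prod id \<tau>"
  have "symplectic g'"
    unfolding g'_def using symplectic_comp symplectic_map_prod pauli_perm_id pauli_perm_inv(1)[OF \<sigma>] \<tau>(1) g
    by metis
  moreover have "g' (PZ,PI) = (PZ,PI)"
    using gZ \<tau>(1) pauli_perm_inv(1)[OF \<sigma>] by (simp add: g'_def pauli_perm_def)
  moreover have "g' (PI,PZ) = (PI,PZ)" "g' (PI,PX) = (PZ,PX)"
    using \<tau> km pauli_perm_inv_apply[OF \<sigma>, of PX] pauli_perm_inv_apply[OF \<sigma>, of PZ]
    by (simp_all add: g'_def gI \<sigma>_def)
  ultimately have "cz_like g'" by (rule symplectic_cz_normal_form)
  thus ?thesis
    using cz_like_cancel_local[OF pauli_perm_id pauli_perm_inv(1)[OF \<sigma>] pauli_perm_id \<tau>(1)] g'_def by simp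
qed

lemma symplectic_cz_like_or_local_like:
  assumes f: "symplectic f" and p: "p \<noteq> PI" and stays_left: "snd (f (p,PI)) = PI"
  shows "cz_like f \<or> local_like f"
proof -
  define p' where "p' = fst (f (p,PI))"
  have fp: "f (p,PI) = (p',PI)" using stays_left by (simp add: p'_def prod_eq_iff)
  have "p' \<noteq> PI"
    using fp p injD[OF symplecticD(3)[OF f], of "(p,PI)" "(PI,PI)"] symplecticD(4)[OF f] by auto
  obtain a where a: "pauli_perm a" "a PZ = p" using pauli_perm_to_Z[OF p] by blast
  obtain b where b: "pauli_perm b" "b PZ = p'" using pauli_perm_to_Z[OF \<open>p' \<noteq> PI\<close>] by blast
  define g where "g = map_prod (inv b) id \<circ> f \<circ> map_prod a id"
  have g: "symplectic g"
    unfolding g_def using symplectic_comp symplectic_map_prod pauli_perm_id pauli_perm_inv(1)[OF b(1)] a(1) f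
    by metis
  have gZ: "g (PZ,PI) = (PZ,PI)"
    using a b fp pauli_perm_inv_apply[OF b(1), of PZ] by (simp add: g_def)
  have "cz_like g \<or> local_like g"
    using symplectic_fixing_ZI_cz_like[OF g gZ] symplectic_fixing_ZI_local_like[OF g gZ] by blast
  thus ?thesis
    using cz_like_cancel_local[OF pauli_perm_inv(1)[OF b(1)] pauli_perm_id a(1) pauli_perm_id]
      local_like_cancel_local[OF pauli_perm_inv(1)[OF b(1)] pauli_perm_id a(1) pauli_perm_id] g_def
    by blast
qed

section \<open>From actions back to gate classes\<close>

lemma CZ_class_if_cz_like:
  assumes G: "clifford2 G" and cz: "cz_like (gate_act G)"
  shows "CZ_class G"
proof -
  obtain s1 s2 s3 s4 where s: "pauli_perm s1" "pauli_perm s2" "pauli_perm s3" "pauli_perm s4"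
    and e: "gate_act G = map_prod s1 s2 \<circ> cz_act \<circ> map_prod s3 s4"
    using cz cz_like_def by blast
  obtain l1 l2 l3 l4 where l: "clifford1 l1" "clifford1 l2" "clifford1 l3" "clifford1 l4"
    and acts: "act1 l1 = s1" "act1 l2 = s2" "act1 l3 = s3" "act1 l4 = s4"
    using pauli_perm_act1 s by metis
  define K where "K = mul2 (mul2 (tensor l1 l2) CZ) (tensor l3 l4)"
  have "clifford2 K" "gate_act K = gate_act G"
    using clifford2_mul2[OF clifford2_mul2(1)[OF clifford2_tensor(1)[OF l(1,2)] clifford2_CZ(1)]
        clifford2_tensor(1)[OF l(3,4)]]
      clifford2_mul2(2)[OF clifford2_tensor(1)[OF l(1,2)] clifford2_CZ(1)]
      clifford2_tensor(2) l acts e clifford2_CZ(2)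
    by (simp_all add: K_def)
  then obtain c r where "G = smult2 c (mul2 K (pmat2 r))"
    using pauli_factor_if_same_gate_act[OF G] by metis
  moreover have "mul2 K (pmat2 r)
      = mul2 (mul2 (tensor l1 l2) CZ) (tensor (mul1 l3 (pmat (fst r))) (mul1 l4 (pmat (snd r))))"
    by (simp add: K_def mul2_assoc pmat2_def tensor_mul1)
  moreover have "clifford1 (mul1 l3 (pmat (fst r)))" "clifford1 (mul1 l4 (pmat (snd r)))"
    using clifford1_mul1(1)[OF l(3) clifford1_pmat] clifford1_mul1(1)[OF l(4) clifford1_pmat] by auto
  ultimately show ?thesis unfolding CZ_class_def gate_class_def using l(1,2) by metis
qed

lemma product_class_if_local_like:
  assumes G: "clifford2 G" and loc: "local_like (gate_act G)"
  shows "product_class G"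
proof -
  obtain s1 s2 where s: "pauli_perm s1" "pauli_perm s2" and e: "gate_act G = map_prod s1 s2"
    using loc local_like_def by blast
  obtain l1 l2 where l: "clifford1 l1" "clifford1 l2" and acts: "act1 l1 = s1" "act1 l2 = s2"
    using pauli_perm_act1 s by metis
  obtain c r where "G = smult2 c (mul2 (tensor l1 l2) (pmat2 r))"
    using pauli_factor_if_same_gate_act[OF G clifford2_tensor(1)[OF l]] clifford2_tensor(2)[OF l] acts e
    by metis
  moreover have "mul2 (tensor l1 l2) (pmat2 r) = tensor (mul1 l1 (pmat (fst r))) (mul1 l2 (pmat (snd r)))"
    by (simp add: pmat2_def tensor_mul1)
  moreover have "clifford1 (mul1 l1 (pmat (fst r)))" "clifford1 (mul1 l2 (pmat (snd r)))"
    using clifford1_mul1(1)[OF l(1) clifford1_pmat] clifford1_mul1(1)[OF l(2) clifford1_pmat] by auto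
  ultimately show ?thesis unfolding product_class_def by metis
qed

lemma spreads_right_if_not_CZ_class:
  assumes "clifford2 C" "\<not> product_class C" "\<not> CZ_class C" "p \<noteq> PI"
  shows "snd (gate_act C (p,PI)) \<noteq> PI"
  using symplectic_cz_like_or_local_like[OF symplectic_gate_act] CZ_class_if_cz_like
    product_class_if_local_like assms by blast

lemma surj_right_part_if_not_CZ_class:
  assumes C: "clifford2 C" "\<not> product_class C" "\<not> CZ_class C"
  shows "surj (\<lambda>p. snd (gate_act C (p,PI)))"
proof -
  have "inj (\<lambda>p. snd (gate_act C (p,PI)))"
  proof (rule injI)
    fix p1 p2 assume "snd (gate_act C (p1,PI)) = snd (gate_act C (p2,PI))"
    hence "snd (gate_act C (pauli_mul p1 p2, PI)) = PI"
      using gate_act_pair_mul[OF C(1), of p1 p2 PI PI] by (simp add: pauli2_mul_def)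
    thus "p1 = p2" using spreads_right_if_not_CZ_class[OF C] pauli_mul_eq_PI_iff by blast
  qed
  thus ?thesis using finite_UNIV_inj_surj[OF finite_UNIV_pauli] by blast
qed

section \<open>Pauli strings under the brickwork circuit\<close>

definition string_mul :: "(int \<Rightarrow> pauli) \<Rightarrow> (int \<Rightarrow> pauli) \<Rightarrow> int \<Rightarrow> pauli" where
  "string_mul P Q = (\<lambda>j. pauli_mul (P j) (Q j))"

definition supp_le :: "(int \<Rightarrow> pauli) \<Rightarrow> int \<Rightarrow> bool" where
  "supp_le P b \<longleftrightarrow> (\<forall>i. P i \<noteq> PI \<longrightarrow> i \<le> b)"

definition finite_supp :: "(int \<Rightarrow> pauli) \<Rightarrow> bool" where
  "finite_supp P \<longleftrightarrow> finite {i. P i \<noteq> PI}"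

lemma supp_leD: "supp_le P b \<Longrightarrow> b < i \<Longrightarrow> P i = PI"
  unfolding supp_le_def by force

lemma string_mul_cancel: "string_mul Q (string_mul P Q) = P"
  by (simp add: string_mul_def)

lemma finite_supp_string_mul: "finite_supp P \<Longrightarrow> finite_supp Q \<Longrightarrow> finite_supp (string_mul P Q)"
  unfolding finite_supp_def string_mul_def
  by (rule finite_subset[of _ "{i. P i \<noteq> PI} \<union> {i. Q i \<noteq> PI}"]) auto

lemma layer_apply:
  "layer par G P j = (if even (j - par) then fst (gate_act (G j) (P j, P (j+1)))
     else snd (gate_act (G (j-1)) (P (j-1), P j)))"
  by (simp add: layer_def Let_def)

lemma layer_string_mul:
  assumes "\<forall>i. clifford2 (G i)"
  shows "layer par G (string_mul P Q) = string_mul (layer par G P) (layer par G Q)"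
  by (rule ext) (simp add: layer_apply string_mul_def gate_act_pair_mul assms pauli2_mul_def)

lemma funpow_Ustep_string_mul:
  assumes "\<forall>i. clifford2 (G i)"
  shows "(Ustep G ^^ t) (string_mul P Q) = string_mul ((Ustep G ^^ t) P) ((Ustep G ^^ t) Q)"
  by (induction t) (simp_all add: Ustep_def layer_string_mul[OF assms])

lemma layer_idle:
  assumes "\<forall>i. clifford2 (G i)" "P (j-1) = PI" "P j = PI" "P (j+1) = PI"
  shows "layer par G P j = PI"
  using assms gate_act_II by (simp add: layer_apply)

lemma supp_le_layer:
  assumes "\<forall>i. clifford2 (G i)" "supp_le P b"
  shows "supp_le (layer par G P) (b + 1)"
  unfolding supp_le_def
proof (intro allI impI, rule ccontr)
  fix j assume "layer par G P j \<noteq> PI" "\<not> j \<le> b + 1"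
  thus False using layer_idle[OF assms(1)] supp_leD[OF assms(2)] by simp
qed

text \<open>A gate straddling the cut between \<open>b\<close> and \<open>b + 1\<close> belongs to the other layer, so the
  support cannot grow.\<close>

lemma supp_le_layer_off_cut:
  assumes cl: "\<forall>i. clifford2 (G i)" and P: "supp_le P b" and off: "even (b + 1 - par)"
  shows "supp_le (layer par G P) b"
  unfolding supp_le_def
proof (intro allI impI, rule ccontr)
  fix j assume ne: "layer par G P j \<noteq> PI" and "\<not> j \<le> b"
  hence "b < j" by simp
  show False
  proof (cases "even (j - par)")
    case True
    thus False using ne \<open>b < j\<close> supp_leD[OF P] cl gate_act_II by (simp add: layer_apply)
  next
    case False
    hence "b < j - 1" using off \<open>b < j\<close> by (cases "j = b + 1") auto
    thus False using ne False \<open>b < j\<close> supp_leD[OF P] cl gate_act_II by (simp add: layer_apply)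
  qed
qed

lemma finite_supp_layer:
  assumes cl: "\<forall>i. clifford2 (G i)" and P: "finite_supp P"
  shows "finite_supp (layer par G P)"
proof -
  let ?S = "{i. P i \<noteq> PI}"
  have "{j. layer par G P j \<noteq> PI} \<subseteq> ?S \<union> (\<lambda>x. x + 1) ` ?S \<union> (\<lambda>x. x - 1) ` ?S"
  proof
    fix j assume "j \<in> {j. layer par G P j \<noteq> PI}"
    hence "P (j-1) \<noteq> PI \<or> P j \<noteq> PI \<or> P (j+1) \<noteq> PI" using layer_idle[OF cl] by blast
    thus "j \<in> ?S \<union> (\<lambda>x. x + 1) ` ?S \<union> (\<lambda>x. x - 1) ` ?S"
      by (auto simp: image_iff intro: bexI[of _ "j - 1"] bexI[of _ "j + 1"])
  qed
  moreover have "finite (?S \<union> (\<lambda>x. x + 1) ` ?S \<union> (\<lambda>x. x - 1) ` ?S)"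
    using P finite_supp_def by auto
  ultimately show ?thesis unfolding finite_supp_def using finite_subset by blast
qed

lemma finite_supp_Ustep: "\<forall>i. clifford2 (G i) \<Longrightarrow> finite_supp P \<Longrightarrow> finite_supp (Ustep G P)"
  by (simp add: Ustep_def finite_supp_layer)

lemma left_wall_iff:
  "left_wall G b c \<longleftrightarrow> (\<forall>P t. finite_supp P \<longrightarrow> supp_le P b \<longrightarrow> t \<ge> 1 \<longrightarrow> supp_le ((Ustep G ^^ t) P) c)"
  unfolding left_wall_def finite_supp_def supp_le_def by (meson not_le)

lemma left_wall_supp_le:
  assumes "left_wall G a c" "a \<le> c" "finite_supp P" "supp_le P a"
  shows "supp_le ((Ustep G ^^ t) P) c"
proof (cases t)
  case 0 thus ?thesis using assms(2,4) by (auto simp: supp_le_def)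
next
  case (Suc n)
  hence "t \<ge> 1" by simp
  thus ?thesis using assms(1,3,4) unfolding left_wall_iff by blast
qed

lemma supp_le_string_mul: "supp_le P b \<Longrightarrow> supp_le Q b \<Longrightarrow> supp_le (string_mul P Q) b"
  unfolding supp_le_def string_mul_def by (metis pauli_mul.simps(1) pauli_mul_PI_right)

lemma supp_le_pred: "supp_le P (b + 1) \<Longrightarrow> P (b + 1) = PI \<Longrightarrow> supp_le P b"
  unfolding supp_le_def by (metis le_less zle_add1_eq_le)

section \<open>Moving the walls inwards\<close>

text \<open>If the right part of \<open>G a\<close> on \<open>p \<otimes> I\<close> can be any Pauli, the Pauli of a string at
  site \<open>a + 1\<close> can be produced from a string on \<open>L\<^sub>a\<close>: directly by \<open>G a\<close> if it acts first (\<open>a\<close> even),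
  after preparing \<open>p\<close> at site \<open>a\<close> with \<open>G (a - 1)\<close> otherwise.\<close>

lemma left_boundary_decomposition_even:
  assumes cl: "\<forall>i. clifford2 (G i)" and su: "surj (\<lambda>p. snd (gate_act (G a) (p,PI)))"
    and a: "even a" and P: "finite_supp P" "supp_le P (a + 1)"
  obtains X Y where "finite_supp X" "supp_le X a" "finite_supp Y" "supp_le Y a"
    "Ustep G P = string_mul (Ustep G X) Y"
proof -
  obtain p where p: "snd (gate_act (G a) (p,PI)) = snd (gate_act (G a) (P a, P (a+1)))"
    using surjD[OF su, of "snd (gate_act (G a) (P a, P (a+1)))"] by auto
  define X where "X i = (if i < a then P i else if i = a then p else PI)" for i
  have X: "supp_le X a" by (auto simp: supp_le_def X_def)
  have "{i. X i \<noteq> PI} \<subseteq> {i. P i \<noteq> PI} \<union> {a}" by (auto simp: X_def)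
  hence fX: "finite_supp X" using P(1) finite_subset by (auto simp: finite_supp_def)
  define D where "D = layer 0 G (string_mul P X)"
  have "supp_le D (a + 1)"
    unfolding D_def using a by (intro supp_le_layer_off_cut[OF cl supp_le_string_mul[OF P(2)]])
      (auto simp: supp_le_def X_def)
  moreover have "D (a+1) = PI"
    using a p gate_act_pair_mul[of "G a" "P a" p "P (a+1)" PI] cl
    by (simp add: D_def layer_apply string_mul_def X_def pauli2_mul_def)
  ultimately have D: "supp_le D a" by (rule supp_le_pred)
  define Y where "Y = layer 1 G D"
  have "supp_le Y a" unfolding Y_def using a by (intro supp_le_layer_off_cut[OF cl D]) simp
  moreover have "finite_supp Y"
    unfolding Y_def D_def using finite_supp_layer cl finite_supp_string_mul P(1) fX by metis
  moreover have "Ustep G P = string_mul (Ustep G X) Y"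
    using string_mul_cancel[of X P] by (metis Ustep_def layer_string_mul[OF cl] D_def Y_def)
  ultimately show thesis using that fX X by blast
qed

lemma left_boundary_decomposition_odd:
  assumes cl: "\<forall>i. clifford2 (G i)" and su: "surj (\<lambda>p. snd (gate_act (G a) (p,PI)))"
    and a: "odd a" and P: "finite_supp P" "supp_le P (a + 1)"
  obtains X R where "finite_supp X" "supp_le X a" "finite_supp R" "supp_le R a"
    "P = string_mul R (Ustep G X)"
proof -
  obtain p where p: "snd (gate_act (G a) (p,PI)) = P (a+1)"
    using surjD[OF su, of "P (a+1)"] by auto
  obtain x where x: "gate_act (G (a-1)) x = (PI,p)"
    using surjD[OF surj_gate_act, of "G (a-1)" "(PI,p)"] cl by auto
  define X where "X i = (if i = a - 1 then fst x else if i = a then snd x else PI)" for i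
  have X: "supp_le X a" by (auto simp: supp_le_def X_def)
  have "{i. X i \<noteq> PI} \<subseteq> {a - 1, a}" by (auto simp: X_def)
  hence fX: "finite_supp X" using finite_subset by (auto simp: finite_supp_def)
  define E where "E = layer 0 G X"
  have E: "supp_le E a" unfolding E_def using a by (intro supp_le_layer_off_cut[OF cl X]) simp
  have "E a = p" using a x by (simp add: E_def layer_apply X_def)
  hence UX_a1: "Ustep G X (a+1) = P (a+1)"
    using a p supp_leD[OF E, of "a+1"] by (simp add: Ustep_def E_def[symmetric] layer_apply)
  have UX: "supp_le (Ustep G X) (a + 1)"
    unfolding Ustep_def E_def[symmetric] using supp_le_layer[OF cl E] .
  define R where "R = string_mul P (Ustep G X)"
  have "supp_le R a"
    unfolding supp_le_def
  proof (intro allI impI, rule ccontr)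
    fix i assume ne: "R i \<noteq> PI" and "\<not> i \<le> a"
    hence "i = a + 1 \<or> a + 1 < i" by auto
    thus False using ne UX_a1 supp_leD[OF P(2)] supp_leD[OF UX] by (auto simp: R_def string_mul_def)
  qed
  moreover have "finite_supp R"
    unfolding R_def using finite_supp_string_mul finite_supp_Ustep cl P(1) fX by blast
  moreover have "P = string_mul R (Ustep G X)" by (simp add: R_def string_mul_def)
  ultimately show thesis using that fX X by blast
qed

lemma left_wall_shrink_left:
  assumes cl: "\<forall>i. clifford2 (G i)" and su: "surj (\<lambda>p. snd (gate_act (G a) (p,PI)))"
    and W: "left_wall G a c" and ac: "a \<le> c"
  shows "left_wall G (a + 1) c"
  unfolding left_wall_iff
proof (intro allI impI)
  fix P and t :: nat assume P: "finite_supp P" "supp_le P (a + 1)" and t: "t \<ge> 1"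
  let ?U = "Ustep G"
  note evolve = left_wall_supp_le[OF W ac]
  have shift: "(?U ^^ t) Q = (?U ^^ (t - 1)) (?U Q)" for Q
    using t by (metis Suc_diff_le diff_Suc_1 funpow_Suc_right o_apply)
  show "supp_le ((?U ^^ t) P) c"
  proof (cases "even a")
    case True
    then obtain X Y where X: "finite_supp X" "supp_le X a" and Y: "finite_supp Y" "supp_le Y a"
      and UP: "?U P = string_mul (?U X) Y"
      using left_boundary_decomposition_even[OF cl su _ P] by metis
    have "(?U ^^ t) P = string_mul ((?U ^^ t) X) ((?U ^^ (t - 1)) Y)"
      by (simp add: shift UP funpow_Ustep_string_mul[OF cl])
    thus ?thesis using evolve[OF X] evolve[OF Y] supp_le_string_mul by simp
  next
    case False
    then obtain X R where X: "finite_supp X" "supp_le X a" and R: "finite_supp R" "supp_le R a"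
      and PR: "P = string_mul R (?U X)"
      using left_boundary_decomposition_odd[OF cl su _ P] by metis
    have "(?U ^^ t) P = string_mul ((?U ^^ t) R) ((?U ^^ Suc t) X)"
      by (simp add: PR funpow_Ustep_string_mul[OF cl] funpow_Suc_right del: funpow.simps)
    thus ?thesis using evolve[OF R, of t] evolve[OF X, of "Suc t"] supp_le_string_mul by simp
  qed
qed

text \<open>A Pauli at site \<open>c\<close> when \<open>G c\<close> acts would be pushed to site \<open>c + 1\<close>, and nothing in
  the same step can bring the string back inside \<open>L\<^sub>c\<close>.\<close>

lemma site_clear_if_spreading_even:
  assumes cl: "\<forall>i. clifford2 (G i)" and spreads: "\<And>p. p \<noteq> PI \<Longrightarrow> snd (gate_act (G c) (p,PI)) \<noteq> PI"
    and c: "even c" and w: "supp_le w c"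
    and Uw: "Ustep G w (c+1) = PI" "Ustep G w (c+2) = PI"
  shows "w c = PI"
proof (rule ccontr)
  assume "w c \<noteq> PI"
  define E where "E = layer 0 G w"
  have "E (c+1) = snd (gate_act (G c) (w c, PI))"
    using c supp_leD[OF w, of "c+1"] by (simp add: E_def layer_apply)
  hence E1: "E (c+1) \<noteq> PI" using spreads \<open>w c \<noteq> PI\<close> by simp
  have "E (c+2) = PI" using supp_leD[OF supp_le_layer[OF cl w], of "c+2"] by (simp add: E_def)
  hence "gate_act (G (c+1)) (E (c+1), PI) = (PI,PI)"
    using Uw c by (simp add: Ustep_def E_def[symmetric] layer_apply prod_eq_iff add.commute)
  thus False using E1 gate_act_eq_II_iff cl by blast
qed

lemma site_clear_if_spreading_odd:
  assumes cl: "\<forall>i. clifford2 (G i)" and spreads: "\<And>p. p \<noteq> PI \<Longrightarrow> snd (gate_act (G c) (p,PI)) \<noteq> PI"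
    and c: "odd c" and v: "supp_le v c" and Uv: "Ustep G v (c+1) = PI"
  shows "Ustep G v c = PI"
proof -
  define E where "E = layer 0 G v"
  have E1: "E (c+1) = PI"
    using c supp_leD[OF v, of "c+1"] supp_leD[OF v, of "c+2"] gate_act_II cl
    by (simp add: E_def layer_apply add.commute)
  hence "snd (gate_act (G c) (E c, PI)) = PI"
    using Uv c by (simp add: Ustep_def E_def[symmetric] layer_apply)
  hence "E c = PI" using spreads by blast
  thus ?thesis using E1 c gate_act_II cl by (simp add: Ustep_def E_def[symmetric] layer_apply)
qed

lemma left_wall_shrink_right:
  assumes cl: "\<forall>i. clifford2 (G i)" and spreads: "\<And>p. p \<noteq> PI \<Longrightarrow> snd (gate_act (G c) (p,PI)) \<noteq> PI"
    and W: "left_wall G a c" and ac: "a \<le> c"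
  shows "left_wall G a (c - 1)"
  unfolding left_wall_iff
proof (intro allI impI)
  fix P and t :: nat assume P: "finite_supp P" "supp_le P a" and t: "t \<ge> 1"
  let ?U = "Ustep G"
  note evolve = left_wall_supp_le[OF W ac P]
  have "(?U ^^ t) P c = PI"
  proof (cases "even c")
    case True
    have "supp_le (?U ((?U ^^ t) P)) c" using evolve[of "Suc t"] by simp
    thus ?thesis
      using site_clear_if_spreading_even[OF cl spreads True evolve[of t]] supp_leD by simp
  next
    case False
    have "?U ((?U ^^ (t - 1)) P) = (?U ^^ t) P"
      using t by (metis Suc_diff_le diff_Suc_1 funpow.simps(2) o_apply)
    thus ?thesis
      using site_clear_if_spreading_odd[OF cl spreads False evolve[of "t - 1"]] evolve[of t] supp_leD
      by simp
  qed
  thus "supp_le ((?U ^^ t) P) (c - 1)"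
    using evolve[of t] unfolding supp_le_def by (metis le_less zle_diff1_eq)
qed

theorem lemma7:
  fixes G :: "int \<Rightarrow> mat2" and a :: int and k :: nat
  assumes "\<forall>i. clifford2 (G i) \<and> \<not> product_class (G i)"
    and "k \<ge> 1"
    and "irreducible_left_wall G a k"
  shows "CZ_class (G a) \<and> CZ_class (G (a + int k))"
proof -
  have cl: "\<forall>i. clifford2 (G i)" and npc: "\<And>i. \<not> product_class (G i)" using assms(1) by auto
  have W: "left_wall G a (a + int k)" and ac: "a \<le> a + int k"
    using assms(3) by (simp_all add: irreducible_left_wall_def)
  have "\<not> left_wall G (a + 1) (a + int k)" "\<not> left_wall G a (a + int k - 1)"
    using assms(2,3) unfolding irreducible_left_wall_def by auto
  moreover have "left_wall G (a + 1) (a + int k)" if "\<not> CZ_class (G a)"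
    using left_wall_shrink_left[OF cl surj_right_part_if_not_CZ_class W ac] cl npc that by blast
  moreover have "left_wall G a (a + int k - 1)" if "\<not> CZ_class (G (a + int k))"
    using left_wall_shrink_right[OF cl spreads_right_if_not_CZ_class W ac] cl npc that by blast
  ultimately show ?thesis by blast
qed

end
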